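(* Let $(\sigma_n)_{n \geq 1}$ be a sequence of permutations with $\sigma_n \in \mathcal{S}_n$ for all $n$, and let $\Sigma_n \in U(n)$ be the permutation matrix of $\sigma_n$, i.e. $\Sigma_n e_j = e_{\sigma_n(j)}$. Then $(\Sigma_n)_{n \geq 1}$ is a virtual isometry if and only if $(\sigma_n)_{n \geq 1}$ is a virtual permutation.
   Context: For $n \geq m \geq 1$, let $p_{n,m}:\mathcal{S}_n\to\mathcal{S}_m$ map $\sigma$ to the permutation obtained by deleting all elements of $\{m+1,\dots,n\}$ from the cycle structure of $\sigma$. A virtual permutation is a sequence $(\sigma_n)_{n\ge1}$ with $\sigma_n\in\mathcal{S}_n$ and $\sigma_m = p_{n,m}(\sigma_n)$ for all $n\ge m\ge1$. Let $(e_k)_{k\ge1}$ be the canonical basis of $\ell^2$; identify $\mathbb{C}^n$ with the span of $e_1,\dots,e_n$ and $U(n)$ with the unitary operators on $\ell^2$ fixing every $e_k$, $k>n$. For $n\ge m\ge1$ and $u\in U(n)$, $\pi_{n,m}(u)$ is the unique $v\in U(m)$ such that the range of $u-v$ is contained in $(u-\mathrm{Id})(\mathrm{span}\{e_k:k>m\})$ (existence and uniqueness are known). A virtual isometry is a sequence $(u_n)_{n\ge1}$ with $u_n\in U(n)$ and $\pi_{n+1,n}(u_{n+1})=u_n$ for all $n\ge1$. *)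

theory Defs
  imports Complex_Main "HOL-Combinatorics.Permutations"
begin

text \<open>Operators on l2 that fix every e_k with k > n are represented by their
  (infinite) matrices A :: nat => nat => complex w.r.t. the canonical basis
  (e_k)_{k >= 1}; column j is the image of e_j.  Entries outside the block
  {1..n} x {1..n} are those of the identity (index 0 is a dummy coordinate,
  also fixed).  With this representation U(m) is literally a subset of U(n)
  for m <= n, exactly as in the paper.\<close>

definition idm :: "nat \<Rightarrow> nat \<Rightarrow> complex" where
  "idm i j = (if i = j then 1 else 0)"

definition in_U :: "nat \<Rightarrow> (nat \<Rightarrow> nat \<Rightarrow> complex) \<Rightarrow> bool" where
  "in_U n A \<longleftrightarrow>
     (\<forall>i j. (i \<notin> {1..n} \<or> j \<notin> {1..n}) \<longrightarrow> A i j = idm i j) \<and>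
     (\<forall>i\<in>{1..n}. \<forall>j\<in>{1..n}. (\<Sum>k\<in>{1..n}. cnj (A k i) * A k j) = idm i j)"

text \<open>Range condition: range (u - v) is contained in (u - Id)(span {e_k : k > m}).
  For u in U(n), v in U(m), both u - v and u - Id vanish on e_k for k > n, so
  only coordinates in {1..n} matter; a vector of span {e_k : k > m} contributes
  to (u - Id) y only through its coordinates in {m+1..n}.\<close>

definition range_cond ::
  "nat \<Rightarrow> nat \<Rightarrow> (nat \<Rightarrow> nat \<Rightarrow> complex) \<Rightarrow> (nat \<Rightarrow> nat \<Rightarrow> complex) \<Rightarrow> bool" where
  "range_cond n m u v \<longleftrightarrow>
     (\<forall>x :: nat \<Rightarrow> complex. \<exists>y :: nat \<Rightarrow> complex.
        (\<forall>k. k \<notin> {m+1..n} \<longrightarrow> y k = 0) \<and>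
        (\<forall>i. (\<Sum>j\<in>{1..n}. (u i j - v i j) * x j) =
             (\<Sum>k\<in>{1..n}. (u i k - idm i k) * y k)))"

definition pi_proj ::
  "nat \<Rightarrow> nat \<Rightarrow> (nat \<Rightarrow> nat \<Rightarrow> complex) \<Rightarrow> (nat \<Rightarrow> nat \<Rightarrow> complex)" where
  "pi_proj n m u = (THE v. in_U m v \<and> range_cond n m u v)"

definition virtual_isometry :: "(nat \<Rightarrow> (nat \<Rightarrow> nat \<Rightarrow> complex)) \<Rightarrow> bool" where
  "virtual_isometry u \<longleftrightarrow>
     (\<forall>n\<ge>1. in_U n (u n) \<and> pi_proj (n+1) n (u (n+1)) = u n)"

text \<open>p_{n,m}: delete m+1..n from the cycle structure of sigma, i.e. each
  j in {1..m} is sent to the first element of its forward orbit (after at least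
  one step) lying in {1..m}.\<close>

definition perm_proj :: "nat \<Rightarrow> nat \<Rightarrow> (nat \<Rightarrow> nat) \<Rightarrow> (nat \<Rightarrow> nat)" where
  "perm_proj n m \<sigma> = (\<lambda>j. if j \<in> {1..m}
      then (\<sigma> ^^ (LEAST k. 0 < k \<and> (\<sigma> ^^ k) j \<in> {1..m})) j
      else j)"

definition virtual_permutation :: "(nat \<Rightarrow> (nat \<Rightarrow> nat)) \<Rightarrow> bool" where
  "virtual_permutation \<sigma> \<longleftrightarrow>
     (\<forall>n\<ge>1. \<sigma> n permutes {1..n}) \<and>
     (\<forall>n m. 1 \<le> m \<longrightarrow> m \<le> n \<longrightarrow> \<sigma> m = perm_proj n m (\<sigma> n))"

definition perm_matrix :: "(nat \<Rightarrow> nat) \<Rightarrow> (nat \<Rightarrow> nat \<Rightarrow> complex)" where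
  "perm_matrix \<sigma> = (\<lambda>i j. if \<sigma> j = i then 1 else 0)"

end

theory Submission
  imports Defs
begin

text \<open>First returns compose: inducing \<sigma> on {1..N} and then on {1..m} \<subseteq> {1..N} is the same as
  inducing directly on {1..m}. Hence a sequence of permutations is virtual as soon as
  \<sigma>_n = p_{n+1,n}(\<sigma>_{n+1}) for all n.

  On the matrix side, if \<sigma>(b) = n+1 and \<tau> = p_{n+1,n}(\<sigma>), the difference of the
  permutation matrices is the rank-one operator x \<mapsto> (x_{n+1} - x_b) (\<Sigma> - Id) e_{n+1},
  so \<tau> satisfies the range condition defining \<pi>_{n+1,n}(\<Sigma>). Conversely the range condition
  forces every column of \<Sigma> - v to be a multiple of (\<Sigma> - Id) e_{n+1}, and the vanishing
  (n+1)-th row of v \<in> U(n) pins down the multiple. So \<pi>_{n+1,n}(\<Sigma>) is the matrix of \<tau>,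
  and both conditions of the theorem reduce to the same consecutive condition.\<close>

definition first_return :: "('a \<Rightarrow> 'a) \<Rightarrow> 'a set \<Rightarrow> 'a \<Rightarrow> 'a \<Rightarrow> bool" where
  "first_return g T x y \<longleftrightarrow>
     (\<exists>k>0. (g ^^ k) x = y \<and> y \<in> T \<and> (\<forall>i. 0 < i \<and> i < k \<longrightarrow> (g ^^ i) x \<notin> T))"

lemma first_return_exists:
  assumes "permutation g" "x \<in> T"
  obtains y where "first_return g T x y"
proof -
  obtain p where "p > 0" "(g ^^ p) x = x"
    using permutation_self[OF assms(1)] .
  then have ex: "\<exists>k. 0 < k \<and> (g ^^ k) x \<in> T"
    using assms(2) by auto
  define k where "k = (LEAST k. 0 < k \<and> (g ^^ k) x \<in> T)"
  have "0 < k \<and> (g ^^ k) x \<in> T"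
    unfolding k_def by (rule LeastI_ex[OF ex])
  moreover have "(g ^^ i) x \<notin> T" if "0 < i" "i < k" for i
    using not_less_Least[of i] that unfolding k_def by blast
  ultimately show thesis
    using that[of "(g ^^ k) x"] unfolding first_return_def by blast
qed

lemma first_return_inj:
  assumes "inj g" "x \<in> T" "x' \<in> T" "first_return g T x y" "first_return g T x' y"
  shows "x = x'"
proof -
  have ordered: "z = z'"
    if "0 < k" "k \<le> k'" "(g ^^ k) z = (g ^^ k') z'" "z \<in> T"
      and avoid: "\<forall>i. 0 < i \<and> i < k' \<longrightarrow> (g ^^ i) z' \<notin> T" for z z' k k'
  proof -
    have "(g ^^ k) z = (g ^^ k) ((g ^^ (k' - k)) z')"
      using that(2,3) by (metis add_diff_inverse_nat funpow_add comp_apply not_le)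
    then have "z = (g ^^ (k' - k)) z'"
      using inj_fn[OF assms(1)] by (simp add: inj_eq)
    moreover have "k' - k = 0"
    proof (rule ccontr)
      assume "k' - k \<noteq> 0"
      then have "(g ^^ (k' - k)) z' \<notin> T"
        using avoid \<open>0 < k\<close> by simp
      then show False
        using \<open>z = (g ^^ (k' - k)) z'\<close> \<open>z \<in> T\<close> by simp
    qed
    ultimately show ?thesis by simp
  qed
  obtain k k' where "0 < k" "(g ^^ k) x = y" "\<forall>i. 0 < i \<and> i < k \<longrightarrow> (g ^^ i) x \<notin> T"
      "0 < k'" "(g ^^ k') x' = y" "\<forall>i. 0 < i \<and> i < k' \<longrightarrow> (g ^^ i) x' \<notin> T"
    using assms(4,5) unfolding first_return_def by blast
  then show ?thesis
    using ordered[of k k' x x'] ordered[of k' k x' x] assms(2,3) by (metis nle_le)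
qed

text \<open>The orbit of the induced map h is the orbit of g with its visits outside S deleted.\<close>

lemma first_return_induced_orbit:
  assumes h: "\<And>x. x \<in> S \<Longrightarrow> first_return g S x (h x)" and x: "x \<in> S"
  shows "\<exists>k'. (g ^^ k') x = (h ^^ k) x \<and> (k' = 0 \<longleftrightarrow> k = 0) \<and>
    (\<forall>i'. 0 < i' \<and> i' < k' \<and> (g ^^ i') x \<in> S \<longrightarrow> (\<exists>i. 0 < i \<and> i < k \<and> (g ^^ i') x = (h ^^ i) x))"
proof (induction k)
  case 0
  show ?case by (intro exI[of _ 0]) simp
next
  case (Suc k)
  then obtain k' where k': "(g ^^ k') x = (h ^^ k) x" "k' = 0 \<longleftrightarrow> k = 0"
    "\<forall>i'. 0 < i' \<and> i' < k' \<and> (g ^^ i') x \<in> S \<longrightarrow> (\<exists>i. 0 < i \<and> i < k \<and> (g ^^ i') x = (h ^^ i) x)"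
    by blast
  have "(h ^^ n) x \<in> S" for n
    by (induction n) (use h x in \<open>auto simp: first_return_def\<close>)
  then obtain p where p: "0 < p" "(g ^^ p) ((h ^^ k) x) = h ((h ^^ k) x)"
    "\<forall>i. 0 < i \<and> i < p \<longrightarrow> (g ^^ i) ((h ^^ k) x) \<notin> S"
    using h unfolding first_return_def by blast
  have shift: "(g ^^ (i + k')) x = (g ^^ i) ((h ^^ k) x)" for i
    using k'(1) by (simp add: funpow_add)
  show ?case
  proof (rule exI[of _ "p + k'"], intro conjI allI impI)
    show "(g ^^ (p + k')) x = (h ^^ Suc k) x"
      using shift p(2) by simp
    show "(p + k' = 0) = (Suc k = 0)"
      using p(1) by simp
    fix i' assume i': "0 < i' \<and> i' < p + k' \<and> (g ^^ i') x \<in> S"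
    consider "i' < k'" | "i' = k'" | "k' < i'" by linarith
    then show "\<exists>i. 0 < i \<and> i < Suc k \<and> (g ^^ i') x = (h ^^ i) x"
    proof cases
      case 1
      then show ?thesis using k'(3) i' less_SucI by blast
    next
      case 2
      then show ?thesis using k'(1,2) i' by auto
    next
      case 3
      then have "(g ^^ i') x = (g ^^ (i' - k')) ((h ^^ k) x)"
        using shift[of "i' - k'"] by (simp add: le_add_diff_inverse2 less_imp_le)
      then show ?thesis using p(3) i' 3 by auto
    qed
  qed
qed

lemma first_return_induced:
  assumes h: "\<And>x. x \<in> S \<Longrightarrow> first_return g S x (h x)"
    and "T \<subseteq> S" "x \<in> S" "first_return h T x y"
  shows "first_return g T x y"
proof -
  obtain k where k: "0 < k" "(h ^^ k) x = y" "y \<in> T" "\<forall>i. 0 < i \<and> i < k \<longrightarrow> (h ^^ i) x \<notin> T"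
    using assms(4) unfolding first_return_def by blast
  obtain k' where k': "(g ^^ k') x = (h ^^ k) x" "k' = 0 \<longleftrightarrow> k = 0"
    "\<forall>i'. 0 < i' \<and> i' < k' \<and> (g ^^ i') x \<in> S \<longrightarrow> (\<exists>i. 0 < i \<and> i < k \<and> (g ^^ i') x = (h ^^ i) x)"
    using first_return_induced_orbit[OF h \<open>x \<in> S\<close>] by blast
  show ?thesis
    unfolding first_return_def
  proof (intro exI[of _ k'] conjI allI impI)
    show "0 < k'" "(g ^^ k') x = y" "y \<in> T"
      using k k' by auto
    fix i' assume i': "0 < i' \<and> i' < k'"
    show "(g ^^ i') x \<notin> T"
    proof
      assume "(g ^^ i') x \<in> T"
      then obtain i where "0 < i" "i < k" "(g ^^ i') x = (h ^^ i) x"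
        using k'(3) i' \<open>T \<subseteq> S\<close> by blast
      with k(4) \<open>(g ^^ i') x \<in> T\<close> show False by simp
    qed
  qed
qed

text \<open>The first argument of perm_proj is ignored by its definition; the lemmas below keep it free.\<close>

lemma perm_proj_eqI:
  assumes "x \<in> {1..m}" "first_return g {1..m} x y"
  shows "perm_proj n m g x = y"
proof -
  obtain k where k: "0 < k" "(g ^^ k) x = y" "y \<in> {1..m}"
    "\<forall>i. 0 < i \<and> i < k \<longrightarrow> (g ^^ i) x \<notin> {1..m}"
    using assms(2) unfolding first_return_def by blast
  have "(LEAST k. 0 < k \<and> (g ^^ k) x \<in> {1..m}) = k"
  proof (rule Least_equality)
    show "0 < k \<and> (g ^^ k) x \<in> {1..m}"
      using k by blast
    show "k \<le> i" if "0 < i \<and> (g ^^ i) x \<in> {1..m}" for i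
      using k(4) that not_le by blast
  qed
  then show ?thesis
    using assms(1) k(2) unfolding perm_proj_def by simp
qed

lemma perm_proj_outside: "x \<notin> {1..m} \<Longrightarrow> perm_proj n m g x = x"
  unfolding perm_proj_def by auto

lemma first_return_perm_proj:
  assumes "permutation g" "x \<in> {1..m}"
  shows "first_return g {1..m} x (perm_proj n m g x)"
  using first_return_exists[OF assms] perm_proj_eqI[OF assms(2)] by metis

lemma perm_proj_permutes:
  assumes "permutation g"
  shows "perm_proj n m g permutes {1..m}"
proof -
  let ?h = "perm_proj n m g"
  have into: "?h ` {1..m} \<subseteq> {1..m}"
    using first_return_perm_proj[OF assms] unfolding first_return_def by blast
  have "inj g"
    using assms by (intro permutation_bijective bij_is_inj)
  then have "inj_on ?h {1..m}"
    using first_return_perm_proj[OF assms] first_return_inj by (metis inj_onI)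
  with into have "bij_betw ?h {1..m} {1..m}"
    by (simp add: bij_betw_def endo_inj_surj)
  then show ?thesis
    by (rule bij_imp_permutes) (rule perm_proj_outside)
qed

lemma perm_proj_perm_proj:
  assumes g: "permutation g" and "m \<le> N"
  shows "perm_proj n m (perm_proj n' N g) = perm_proj n'' m g"
proof
  fix x
  let ?h = "perm_proj n' N g"
  show "perm_proj n m ?h x = perm_proj n'' m g x"
  proof (cases "x \<in> {1..m}")
    case False
    then show ?thesis by (simp add: perm_proj_outside)
  next
    case True
    have "permutation ?h"
      using perm_proj_permutes[OF g] by (rule permutes_imp_permutation[rotated]) simp
    then have "first_return ?h {1..m} x (perm_proj n m ?h x)"
      using True by (rule first_return_perm_proj)
    moreover have "first_return g {1..N} y (?h y)" if "y \<in> {1..N}" for y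
      using g that by (rule first_return_perm_proj)
    ultimately have "first_return g {1..m} x (perm_proj n m ?h x)"
      using first_return_induced[of "{1..N}" g ?h "{1..m}" x] True \<open>m \<le> N\<close> by auto
    then show ?thesis
      by (rule perm_proj_eqI[OF True, symmetric])
  qed
qed

lemma perm_proj_self:
  assumes "g permutes {1..m}"
  shows "perm_proj n m g = g"
proof
  fix x
  show "perm_proj n m g x = g x"
  proof (cases "x \<in> {1..m}")
    case True
    then have "first_return g {1..m} x (g x)"
      using permutes_in_image[OF assms] unfolding first_return_def
      by (intro exI[of _ 1]) auto
    then show ?thesis by (rule perm_proj_eqI[OF True])
  next
    case False
    then show ?thesis
      using assms by (simp add: perm_proj_outside permutes_not_in)
  qed
qed

lemma perm_proj_Suc:
  assumes s: "s permutes {1..N+1}" and x: "x \<in> {1..N}"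
  shows "perm_proj n N s x = (if s x = N+1 then s (N+1) else s x)"
proof (rule perm_proj_eqI[OF x])
  have sx: "s x \<in> {1..N+1}" and sN: "s (N+1) \<in> {1..N+1}"
    using x permutes_in_image[OF s] by auto
  have moved: "s (N+1) \<noteq> N+1" if "s x = N+1"
    using that x permutes_inj[OF s] by (metis inj_eq atLeastAtMost_iff add_le_same_cancel1 not_one_le_zero)
  show "first_return s {1..N} x (if s x = N+1 then s (N+1) else s x)"
  proof (cases "s x = N+1")
    case True
    with sN moved show ?thesis
      unfolding first_return_def
      by (intro exI[of _ 2]) (auto simp: numeral_2_eq_2 less_Suc_eq)
  next
    case False
    with sx show ?thesis
      unfolding first_return_def by (intro exI[of _ 1]) auto
  qed
qed

lemma virtual_permutation_iff_consecutive:
  assumes \<sigma>: "\<And>n. n \<ge> 1 \<Longrightarrow> \<sigma> n permutes {1..n}"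
  shows "virtual_permutation \<sigma> \<longleftrightarrow> (\<forall>n\<ge>1. perm_proj (n+1) n (\<sigma> (n+1)) = \<sigma> n)"
proof
  assume "virtual_permutation \<sigma>"
  then show "\<forall>n\<ge>1. perm_proj (n+1) n (\<sigma> (n+1)) = \<sigma> n"
    unfolding virtual_permutation_def by (metis le_add1)
next
  assume step: "\<forall>n\<ge>1. perm_proj (n+1) n (\<sigma> (n+1)) = \<sigma> n"
  have all: "\<sigma> m = perm_proj (m+d) m (\<sigma> (m+d))" if "1 \<le> m" for m d
  proof (induction d)
    case 0
    show ?case using perm_proj_self[OF \<sigma>[OF \<open>1 \<le> m\<close>]] by simp
  next
    case (Suc d)
    have "permutation (\<sigma> (m+d+1))"
      using \<sigma>[of "m+d+1"] by (intro permutes_imp_permutation) auto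
    then have "perm_proj (m+d+1) m (\<sigma> (m+d+1))
        = perm_proj (m+d) m (perm_proj (m+d+1) (m+d) (\<sigma> (m+d+1)))"
      by (rule perm_proj_perm_proj[symmetric]) simp
    also have "perm_proj (m+d+1) (m+d) (\<sigma> (m+d+1)) = \<sigma> (m+d)"
      using step \<open>1 \<le> m\<close> by simp
    finally show ?case using Suc.IH by simp
  qed
  show "virtual_permutation \<sigma>"
    unfolding virtual_permutation_def
  proof (intro conjI allI impI)
    show "\<sigma> n permutes {1..n}" if "1 \<le> n" for n
      using \<sigma> that .
    fix n m :: nat
    assume "1 \<le> m" "m \<le> n"
    then show "\<sigma> m = perm_proj n m (\<sigma> n)"
      using all[of m "n - m"] by simp
  qed
qed

lemma perm_matrix_inject: "perm_matrix f = perm_matrix g \<longleftrightarrow> f = g"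
proof
  assume eq: "perm_matrix f = perm_matrix g"
  show "f = g"
  proof
    fix x
    have "perm_matrix f (f x) x = perm_matrix g (f x) x" using eq by simp
    then show "f x = g x" unfolding perm_matrix_def by (simp split: if_splits)
  qed
qed simp

lemma perm_matrix_in_U:
  assumes s: "s permutes {1..n}"
  shows "in_U n (perm_matrix s)"
  unfolding in_U_def
proof (intro conjI allI impI ballI)
  fix i j assume "i \<notin> {1..n} \<or> j \<notin> {1..n}"
  then show "perm_matrix s i j = idm i j"
    using permutes_in_image[OF s, of j] permutes_not_in[OF s, of j]
    unfolding perm_matrix_def idm_def by auto
next
  fix i j assume i: "i \<in> {1..n}" and j: "j \<in> {1..n}"
  have "(\<Sum>k\<in>{1..n}. cnj (perm_matrix s k i) * perm_matrix s k j) =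
        (\<Sum>k\<in>{1..n}. if k = s i then (if s j = s i then 1 else 0) else 0)"
    by (rule sum.cong) (auto simp: perm_matrix_def)
  also have "\<dots> = (if s j = s i then 1 else 0)"
    using permutes_in_image[OF s] i by simp
  also have "\<dots> = idm i j"
    using permutes_inj[OF s] unfolding idm_def by (auto simp: inj_eq)
  finally show "(\<Sum>k\<in>{1..n}. cnj (perm_matrix s k i) * perm_matrix s k j) = idm i j" .
qed

lemma sum_mult_idm: "finite A \<Longrightarrow> j \<in> A \<Longrightarrow> (\<Sum>k\<in>A. f k * idm k j) = f j"
  by (simp add: idm_def if_distrib cong: if_cong)

lemma range_cond_column:
  assumes "range_cond (N+1) N u v" "j \<in> {1..N+1}"
  obtains c where "\<And>i. u i j - v i j = (u i (N+1) - idm i (N+1)) * c"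
proof -
  obtain y where y0: "\<And>k. k \<notin> {N+1..N+1} \<Longrightarrow> y k = 0" and
    y: "\<And>i. (\<Sum>j'\<in>{1..N+1}. (u i j' - v i j') * idm j' j) = (\<Sum>k\<in>{1..N+1}. (u i k - idm i k) * y k)"
    using assms(1) unfolding range_cond_def by metis
  have "u i j - v i j = (u i (N+1) - idm i (N+1)) * y (N+1)" for i
  proof -
    have "u i j - v i j = (\<Sum>j'\<in>{1..N+1}. (u i j' - v i j') * idm j' j)"
      using assms(2) by (subst sum_mult_idm) simp_all
    also have "\<dots> = (\<Sum>k\<in>{1..N+1}. (u i k - idm i k) * y k)"
      by (rule y)
    also have "\<dots> = (\<Sum>k\<in>{1..N+1}. ((u i k - idm i k) * y (N+1)) * idm k (N+1))"
      by (rule sum.cong) (auto simp: idm_def y0)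
    also have "\<dots> = (u i (N+1) - idm i (N+1)) * y (N+1)"
      by (subst sum_mult_idm) simp_all
    finally show ?thesis .
  qed
  then show thesis by (rule that)
qed

text \<open>The hypothesis on u holds for every u \<in> U(N+1), since its (N+1)-th column is a unit vector.\<close>

lemma range_cond_unique:
  assumes col: "u (N+1) (N+1) = 1 \<Longrightarrow> (\<forall>i. u i (N+1) = idm i (N+1))"
    and v: "in_U N v" "range_cond (N+1) N u v"
    and w: "in_U N w" "range_cond (N+1) N u w"
  shows "v = w"
proof (intro ext)
  fix i j
  show "v i j = w i j"
  proof (cases "j \<in> {1..N}")
    case False
    then show ?thesis using v(1) w(1) unfolding in_U_def by auto
  next
    case True
    then have j: "j \<in> {1..N+1}" by simp
    obtain c where c: "\<And>i. u i j - v i j = (u i (N+1) - idm i (N+1)) * c"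
      using range_cond_column[OF v(2) j] by metis
    obtain c' where c': "\<And>i. u i j - w i j = (u i (N+1) - idm i (N+1)) * c'"
      using range_cond_column[OF w(2) j] by metis
    have "v (N+1) j = 0" "w (N+1) j = 0"
      using v(1) w(1) True unfolding in_U_def idm_def by auto
    then have "(u (N+1) (N+1) - 1) * c = (u (N+1) (N+1) - 1) * c'"
      using c[of "N+1"] c'[of "N+1"] by (simp add: idm_def)
    then have "c = c' \<or> (\<forall>i. u i (N+1) = idm i (N+1))"
      using col by auto
    then have "u i j - v i j = u i j - w i j"
      using c[of i] c'[of i] by auto
    then show ?thesis by simp
  qed
qed

lemma range_cond_rank_one:
  assumes "\<And>i j. j \<in> {1..N+1} \<Longrightarrow> u i j - v i j = (u i (N+1) - idm i (N+1)) * f j"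
  shows "range_cond (N+1) N u v"
  unfolding range_cond_def
proof
  fix x :: "nat \<Rightarrow> complex"
  let ?c = "\<Sum>j\<in>{1..N+1}. f j * x j"
  show "\<exists>y. (\<forall>k. k \<notin> {N+1..N+1} \<longrightarrow> y k = 0) \<and>
      (\<forall>i. (\<Sum>j\<in>{1..N+1}. (u i j - v i j) * x j) = (\<Sum>k\<in>{1..N+1}. (u i k - idm i k) * y k))"
  proof (intro exI[of _ "\<lambda>k. ?c * idm k (N+1)"] conjI allI impI)
    fix i
    have "(\<Sum>j\<in>{1..N+1}. (u i j - v i j) * x j)
        = (\<Sum>j\<in>{1..N+1}. (u i (N+1) - idm i (N+1)) * (f j * x j))"
      by (rule sum.cong) (simp_all add: assms mult.assoc)
    also have "\<dots> = (u i (N+1) - idm i (N+1)) * ?c"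
      by (simp only: sum_distrib_left)
    also have "\<dots> = (\<Sum>k\<in>{1..N+1}. ((u i k - idm i k) * ?c) * idm k (N+1))"
      by (subst sum_mult_idm) simp_all
    also have "\<dots> = (\<Sum>k\<in>{1..N+1}. (u i k - idm i k) * (?c * idm k (N+1)))"
      by (simp only: mult.assoc)
    finally show "(\<Sum>j\<in>{1..N+1}. (u i j - v i j) * x j)
        = (\<Sum>k\<in>{1..N+1}. (u i k - idm i k) * (?c * idm k (N+1)))" .
  qed (simp add: idm_def)
qed

lemma pi_proj_eqI:
  assumes "u (N+1) (N+1) = 1 \<Longrightarrow> (\<forall>i. u i (N+1) = idm i (N+1))"
    and "in_U N v" "range_cond (N+1) N u v"
  shows "pi_proj (N+1) N u = v"
  unfolding pi_proj_def
proof (rule the_equality)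
  show "in_U N v \<and> range_cond (N+1) N u v"
    using assms(2,3) ..
  show "w = v" if "in_U N w \<and> range_cond (N+1) N u w" for w
    using range_cond_unique[of u N w v] assms that by blast
qed

lemma perm_matrix_diff_perm_proj:
  assumes s: "s permutes {1..N+1}" and b: "s b = N+1" and j: "j \<in> {1..N+1}"
  shows "perm_matrix s i j - perm_matrix (perm_proj n N s) i j =
    (perm_matrix s i (N+1) - idm i (N+1)) * (idm j (N+1) - idm j b)"
proof (cases "j = N+1")
  case True
  then show ?thesis
    using b perm_proj_outside[of "N+1" N n s]
    by (auto simp: perm_matrix_def idm_def)
next
  case False
  then have "j \<in> {1..N}" using j by auto
  moreover have "s j = N+1 \<longleftrightarrow> j = b"
    using b permutes_inj[OF s] by (metis injD)
  ultimately show ?thesis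
    using False perm_proj_Suc[OF s] by (auto simp: perm_matrix_def idm_def)
qed

lemma pi_proj_perm_matrix:
  assumes s: "s permutes {1..N+1}"
  shows "pi_proj (N+1) N (perm_matrix s) = perm_matrix (perm_proj n N s)"
proof (rule pi_proj_eqI)
  show "\<forall>i. perm_matrix s i (N+1) = idm i (N+1)" if "perm_matrix s (N+1) (N+1) = 1"
    using that by (auto simp: perm_matrix_def idm_def split: if_splits)
  show "in_U N (perm_matrix (perm_proj n N s))"
    using s by (intro perm_matrix_in_U perm_proj_permutes permutes_imp_permutation) auto
  obtain b where "s b = N+1"
    using permutes_surj[OF s] by (metis surjD)
  then show "range_cond (N+1) N (perm_matrix s) (perm_matrix (perm_proj n N s))"
    by (intro range_cond_rank_one[where f="\<lambda>j. idm j (N+1) - idm j b"]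
        perm_matrix_diff_perm_proj[OF s])
qed

lemma virtual_isometry_perm_matrix_iff:
  assumes \<sigma>: "\<And>n. n \<ge> 1 \<Longrightarrow> \<sigma> n permutes {1..n}"
  shows "virtual_isometry (\<lambda>n. perm_matrix (\<sigma> n)) \<longleftrightarrow>
    (\<forall>n\<ge>1. perm_proj (n+1) n (\<sigma> (n+1)) = \<sigma> n)"
proof -
  have "pi_proj (n+1) n (perm_matrix (\<sigma> (n+1))) = perm_matrix (perm_proj (n+1) n (\<sigma> (n+1)))" for n
    using \<sigma>[of "n+1"] by (intro pi_proj_perm_matrix) simp
  then show ?thesis
    unfolding virtual_isometry_def using \<sigma> perm_matrix_in_U by (simp add: perm_matrix_inject)
qed

theorem proposition2p3:
  fixes \<sigma> :: "nat \<Rightarrow> (nat \<Rightarrow> nat)"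
  assumes "\<And>n. n \<ge> 1 \<Longrightarrow> \<sigma> n permutes {1..n}"
  shows "virtual_isometry (\<lambda>n. perm_matrix (\<sigma> n)) \<longleftrightarrow> virtual_permutation \<sigma>"
  using virtual_isometry_perm_matrix_iff[OF assms] virtual_permutation_iff_consecutive[OF assms]
  by simp

end
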